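(* Let $X$ be a regular closed subset of a topological space $T$ and $S$ a connected component of $-X$. If $-X$ has finitely many components, then $\delta S\subseteq X$. Alternatively, if $T$ is locally connected, then $\delta S\subseteq X$.
   Context: $-X$ denotes $\overline{T\setminus X}$, the closure of the complement of $X$. $\delta S=\overline{S}\setminus\mathrm{int}(S)$ is the boundary of $S$. A component is a maximal connected subset. $T$ is locally connected if every neighbourhood of every point includes a connected neighbourhood of that point. *)

theory Defs
  imports "HOL-Analysis.Analysis"
begin

definition regular_closed_in :: "'a topology \<Rightarrow> 'a set \<Rightarrow> bool" where
  "regular_closed_in T X \<longleftrightarrow> X \<subseteq> topspace T \<and> T closure_of (T interior_of X) = X"

text \<open>The paper's -X: closure of the complement of X.\<close>
definition neg_in :: "'a topology \<Rightarrow> 'a set \<Rightarrow> 'a set" where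
  "neg_in T X = T closure_of (topspace T - X)"

end

theory Submission
  imports Defs
begin

text \<open>Let \<open>Y = -X\<close>. Points of \<open>T - X\<close> lie in the interior of \<open>Y\<close>, and a component \<open>S\<close> of \<open>Y\<close>
  contains a neighbourhood of each of its points interior to \<open>Y\<close>: with finitely many components
  because \<open>S\<close> is then open in \<open>Y\<close>, in a locally connected space because a connected neighbourhood
  inside the interior of \<open>Y\<close> is swallowed by \<open>S\<close>. As \<open>S\<close> is closed, its frontier consists of
  points of \<open>S\<close> not interior to \<open>S\<close>, hence not interior to \<open>Y\<close>, hence in \<open>X\<close>.\<close>

lemma interior_of_Int_subset_openin_subtopology:
  assumes "openin (subtopology T Y) S"
  shows "S \<inter> T interior_of Y \<subseteq> T interior_of S"
proof -
  obtain U where U: "openin T U" "S = U \<inter> Y"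
    using assms by (auto simp: openin_subtopology)
  have "U \<inter> T interior_of Y \<subseteq> S"
    using U(2) interior_of_subset[of T Y] by blast
  moreover have "openin T (U \<inter> T interior_of Y)"
    using U(1) by (simp add: openin_Int)
  ultimately have "U \<inter> T interior_of Y \<subseteq> T interior_of S"
    by (rule interior_of_maximal)
  then show ?thesis
    using U(2) by blast
qed

lemma interior_of_Int_subset_connected_component_locally_connected:
  assumes "locally_connected_space T"
    and S: "S \<in> connected_components_of (subtopology T Y)"
  shows "S \<inter> T interior_of Y \<subseteq> T interior_of S"
proof
  fix x assume x: "x \<in> S \<inter> T interior_of Y"
  then obtain V where V: "openin T V" "connectedin T V" "x \<in> V" "V \<subseteq> T interior_of Y"
    using assms(1) openin_interior_of[of T Y] unfolding locally_connected_space by blast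
  have "V \<subseteq> Y"
    using V(4) interior_of_subset[of T Y] by blast
  with V(2) have "connectedin (subtopology T Y) V"
    by (simp add: connectedin_subtopology)
  moreover have "\<not> disjnt S V"
    using x V(3) by (auto simp: disjnt_def)
  ultimately have "V \<subseteq> S"
    using connected_components_of_maximal[OF S] by blast
  then show "x \<in> T interior_of S"
    using interior_of_maximal[OF _ V(1)] V(3) by blast
qed

lemma frontier_of_connected_component_closedin:
  assumes "closedin T Y"
    and S: "S \<in> connected_components_of (subtopology T Y)"
    and "S \<inter> T interior_of Y \<subseteq> T interior_of S"
  shows "T frontier_of S \<subseteq> topspace T - T interior_of Y"
proof -
  have "closedin T S"
    using closedin_connected_components_of[OF S] assms(1) by (rule closedin_trans_full)
  then have "T frontier_of S \<subseteq> S"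
    by (rule frontier_of_subset_closedin)
  moreover have "T frontier_of S \<inter> T interior_of S = {}"
    by (auto simp: frontier_of_def)
  ultimately show ?thesis
    using assms(3) frontier_of_subset_topspace[of T S] by blast
qed

theorem lemma2p1:
  fixes T :: "'a topology" and X S :: "'a set"
  assumes "regular_closed_in T X"
    and "S \<in> connected_components_of (subtopology T (neg_in T X))"
    and "finite (connected_components_of (subtopology T (neg_in T X))) \<or> locally_connected_space T"
  shows "T frontier_of S \<subseteq> X"
proof -
  let ?Y = "neg_in T X"
  have "closedin T X"
    using assms(1) unfolding regular_closed_in_def by (metis closedin_closure_of)
  then have complement_interior: "topspace T - X \<subseteq> T interior_of ?Y"
    unfolding neg_in_def by (intro interior_of_maximal) (auto simp: openin_diff closure_of_subset)
  have "S \<inter> T interior_of ?Y \<subseteq> T interior_of S"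
    using assms(3)
  proof
    assume "finite (connected_components_of (subtopology T ?Y))"
    then have "openin (subtopology T ?Y) S"
      using assms(2) by (rule open_in_finite_connected_components)
    then show ?thesis
      by (rule interior_of_Int_subset_openin_subtopology)
  next
    assume "locally_connected_space T"
    then show ?thesis
      using assms(2) by (rule interior_of_Int_subset_connected_component_locally_connected)
  qed
  then have "T frontier_of S \<subseteq> topspace T - T interior_of ?Y"
    using assms(2) frontier_of_connected_component_closedin[of T ?Y S] by (simp add: neg_in_def)
  with complement_interior show ?thesis
    by blast
qed

end
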